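(* Let $\mathcal{H},\mathcal{K}$ be complex Hilbert spaces and $(f_*,f^* ):(\mathsf{P}(\mathcal{H}),\mathsf{L}(\mathcal{H}),\bar e_{\mathcal{H}})\to(\mathsf{P}(\mathcal{K}),\mathsf{L}(\mathcal{K}),\bar e_{\mathcal{K}})$ a Chu morphism. Define $f^{\rightarrow}:\mathsf{L}(\mathcal{H})\to\mathsf{L}(\mathcal{K})$ by $f^{\rightarrow}(S)=\bigvee\{f_*([\psi]):\psi\in S,\psi\ne0\}$ (join in the lattice $\mathsf{L}(\mathcal{K})$). Then $f^{\rightarrow}$ is left adjoint to $f^*$: for all $S\in\mathsf{L}(\mathcal{H})$ and $T\in\mathsf{L}(\mathcal{K})$, $f^{\rightarrow}(S)\subseteq T$ if and only if $S\subseteq f^*(T)$.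
   Context: A Chu morphism $(X,A,e)\to(X',A',e')$ between Chu spaces over $[0,1]$ is a pair $(f_*:X\to X',f^*:A'\to A)$ with $e(x,f^*(a'))=e'(f_*(x),a')$ for all $x,a'$. For a complex Hilbert space $\mathcal{H}$: $\mathsf{L}(\mathcal{H})$ is the lattice of closed subspaces ordered by inclusion, $P_S$ the orthogonal projector onto $S$, $\mathsf{P}(\mathcal{H})$ the set of rays $[\psi]=\{\lambda\psi:\lambda\in\mathbb{C}\}$, $\psi\ne0$, and $\bar e_{\mathcal{H}}([\psi],S)=\|P_S\psi\|^2/\|\psi\|^2$. *)

theory Defs
  imports "HOL-Analysis.Analysis"
begin

text \<open>HOL-Analysis only provides real inner product spaces, so a complex
pre-Hilbert space is introduced as a type class: a real normed vector space
carrying a complex scalar multiplication (compatible with the real one) and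
a sesquilinear, conjugate-symmetric inner product (linear in the second
argument) whose induced norm is the given norm.\<close>

class complex_inner = real_normed_vector +
  fixes scaleC :: "complex \<Rightarrow> 'a \<Rightarrow> 'a" (infixr "*\<^sub>C" 75)
    and cinner :: "'a \<Rightarrow> 'a \<Rightarrow> complex"
  assumes scaleC_add_right: "a *\<^sub>C (x + y) = a *\<^sub>C x + a *\<^sub>C y"
    and scaleC_add_left: "(a + b) *\<^sub>C x = a *\<^sub>C x + b *\<^sub>C x"
    and scaleC_scaleC: "a *\<^sub>C (b *\<^sub>C x) = (a * b) *\<^sub>C x"
    and scaleC_one: "1 *\<^sub>C x = x"
    and scaleR_scaleC: "scaleR r x = complex_of_real r *\<^sub>C x"
    and cinner_commute: "cinner x y = cnj (cinner y x)"
    and cinner_add_right: "cinner x (y + z) = cinner x y + cinner x z"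
    and cinner_scaleC_right: "cinner x (a *\<^sub>C y) = a * cinner x y"
    and cinner_self_norm: "cinner x x = complex_of_real ((norm x)\<^sup>2)"

class chilbert = complex_inner + complete_space

definition csubspace :: "'a::complex_inner set \<Rightarrow> bool" where
  "csubspace S \<longleftrightarrow> 0 \<in> S \<and> (\<forall>x\<in>S. \<forall>y\<in>S. x + y \<in> S) \<and> (\<forall>c. \<forall>x\<in>S. c *\<^sub>C x \<in> S)"

definition closed_subspaces :: "'a::complex_inner set set" where
  "closed_subspaces = {S. csubspace S \<and> closed S}"

definition L_Sup :: "'a::complex_inner set set \<Rightarrow> 'a set" where
  "L_Sup F = \<Inter>{T \<in> closed_subspaces. \<forall>A\<in>F. A \<subseteq> T}"

definition proj :: "'a::complex_inner set \<Rightarrow> 'a \<Rightarrow> 'a" where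
  "proj S \<psi> = (THE p. p \<in> S \<and> (\<forall>s\<in>S. cinner s (\<psi> - p) = 0))"

definition ray :: "'a::complex_inner \<Rightarrow> 'a set" where
  "ray \<psi> = {c *\<^sub>C \<psi> | c. True}"

definition rays :: "'a::complex_inner set set" where
  "rays = {ray \<psi> | \<psi>. \<psi> \<noteq> 0}"

text \<open>\<open>ebar([\<psi>], S) = \<parallel>P_S \<psi>\<parallel>^2 / \<parallel>\<psi>\<parallel>^2\<close>, computed with a nonzero representative
of the ray (independent of the representative).\<close>
definition ebar :: "'a::complex_inner set \<Rightarrow> 'a set \<Rightarrow> real" where
  "ebar r S = (let \<psi> = (SOME \<psi>. \<psi> \<noteq> 0 \<and> ray \<psi> = r) in (norm (proj S \<psi>))\<^sup>2 / (norm \<psi>)\<^sup>2)"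

definition chu_morphism ::
  "'x set \<Rightarrow> 'a set \<Rightarrow> ('x \<Rightarrow> 'a \<Rightarrow> real) \<Rightarrow> 'y set \<Rightarrow> 'b set \<Rightarrow> ('y \<Rightarrow> 'b \<Rightarrow> real)
   \<Rightarrow> ('x \<Rightarrow> 'y) \<Rightarrow> ('b \<Rightarrow> 'a) \<Rightarrow> bool" where
  "chu_morphism X A e X' A' e' f_low f_up \<longleftrightarrow>
     (\<forall>x\<in>X. f_low x \<in> X') \<and> (\<forall>a'\<in>A'. f_up a' \<in> A) \<and>
     (\<forall>x\<in>X. \<forall>a'\<in>A'. e x (f_up a') = e' (f_low x) a')"

definition f_direct :: "('a::complex_inner set \<Rightarrow> 'b::complex_inner set) \<Rightarrow> 'a set \<Rightarrow> 'b set" where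
  "f_direct f_low S = L_Sup {f_low (ray \<psi>) | \<psi>. \<psi> \<in> S \<and> \<psi> \<noteq> 0}"

end

theory Submission imports Defs begin

text \<open>The value \<open>ebar [\<psi>] S\<close> equals 1 exactly when \<open>\<psi> \<in> S\<close>: by the projection
theorem \<open>\<psi> = P\<^sub>S \<psi> + (\<psi> - P\<^sub>S \<psi>)\<close> is an orthogonal decomposition, so
\<open>\<parallel>P\<^sub>S \<psi>\<parallel> = \<parallel>\<psi>\<parallel>\<close> forces \<open>\<psi> - P\<^sub>S \<psi> = 0\<close>. Hence the Chu condition
\<open>ebar [\<psi>] (f\<^sup>* T) = ebar (f\<^sub>* [\<psi>]) T\<close> says that \<open>f\<^sub>* [\<psi>] \<subseteq> T\<close> iff
\<open>\<psi> \<in> f\<^sup>* T\<close>, and the adjunction follows from the universal property of the join.\<close>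

lemma minus_eq_scaleC: "- (x::'a::complex_inner) = (-1) *\<^sub>C x"
  using scaleR_scaleC[of "-1" x] by simp

lemma cinner_zero_right [simp]: "cinner x (0::'a::complex_inner) = 0"
  using cinner_add_right[of x "0::'a" 0] by simp

lemma cinner_zero_left [simp]: "cinner (0::'a::complex_inner) x = 0"
  by (metis cinner_commute cinner_zero_right complex_cnj_zero)

lemma cinner_minus_right: "cinner x (- (y::'a::complex_inner)) = - cinner x y"
  using cinner_add_right[of x y "-y"] by (simp add: eq_neg_iff_add_eq_0 add.commute)

lemma cinner_diff_right: "cinner x ((y::'a::complex_inner) - z) = cinner x y - cinner x z"
  using cinner_add_right[of x y "-z"] by (simp add: cinner_minus_right)

lemma cinner_add_left: "cinner ((x::'a::complex_inner) + y) z = cinner x z + cinner y z"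
  by (metis cinner_commute cinner_add_right complex_cnj_add)

lemma cinner_scaleC_left: "cinner (a *\<^sub>C (x::'a::complex_inner)) y = cnj a * cinner x y"
  by (metis cinner_commute cinner_scaleC_right complex_cnj_mult)

lemma cinner_diff_left: "cinner ((x::'a::complex_inner) - y) z = cinner x z - cinner y z"
  by (metis cinner_commute cinner_diff_right complex_cnj_diff)

lemma power2_norm_eq_cinner: "(norm (x::'a::complex_inner))\<^sup>2 = Re (cinner x x)"
  by (simp add: cinner_self_norm)

lemma cinner_self_eq_zero: "cinner (x::'a::complex_inner) x = 0 \<longleftrightarrow> x = 0"
  by (simp add: cinner_self_norm)

lemma Re_cinner_commute: "Re (cinner (y::'a::complex_inner) x) = Re (cinner x y)"
  by (subst cinner_commute) simp

lemma power2_norm_add: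
  "(norm ((x::'a::complex_inner) + y))\<^sup>2 = (norm x)\<^sup>2 + (norm y)\<^sup>2 + 2 * Re (cinner x y)"
  unfolding power2_norm_eq_cinner
  by (simp add: cinner_add_left cinner_add_right Re_cinner_commute[of y x])

lemma power2_norm_diff:
  "(norm ((x::'a::complex_inner) - y))\<^sup>2 = (norm x)\<^sup>2 + (norm y)\<^sup>2 - 2 * Re (cinner x y)"
  unfolding power2_norm_eq_cinner
  by (simp add: cinner_diff_left cinner_diff_right Re_cinner_commute[of y x])

lemma power2_norm_scaleC: "(norm (a *\<^sub>C (x::'a::complex_inner)))\<^sup>2 = (cmod a)\<^sup>2 * (norm x)\<^sup>2"
proof -
  have "cinner (a *\<^sub>C x) (a *\<^sub>C x) = (cnj a * a) * cinner x x"
    by (simp add: cinner_scaleC_left cinner_scaleC_right)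
  also have "cnj a * a = of_real ((cmod a)\<^sup>2)"
    by (metis complex_norm_square mult.commute)
  finally show ?thesis
    unfolding power2_norm_eq_cinner by (simp add: cinner_self_norm)
qed

lemma parallelogram_law:
  "(norm ((x::'a::complex_inner) + y))\<^sup>2 + (norm (x - y))\<^sup>2 = 2 * (norm x)\<^sup>2 + 2 * (norm y)\<^sup>2"
  by (simp add: power2_norm_add power2_norm_diff)

lemma csubspace_0: "csubspace S \<Longrightarrow> 0 \<in> S"
  unfolding csubspace_def by blast

lemma csubspace_add: "csubspace S \<Longrightarrow> x \<in> S \<Longrightarrow> y \<in> S \<Longrightarrow> x + y \<in> S"
  unfolding csubspace_def by blast

lemma csubspace_scaleC: "csubspace S \<Longrightarrow> x \<in> S \<Longrightarrow> c *\<^sub>C x \<in> S"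
  unfolding csubspace_def by blast

lemma csubspace_scaleR: "csubspace S \<Longrightarrow> x \<in> S \<Longrightarrow> scaleR r x \<in> S"
  by (simp add: scaleR_scaleC csubspace_scaleC)

lemma csubspace_diff: "csubspace S \<Longrightarrow> x \<in> S \<Longrightarrow> y \<in> S \<Longrightarrow> x - y \<in> S"
  by (metis csubspace_add csubspace_scaleC minus_eq_scaleC diff_conv_add_uminus)

lemma closed_subspacesD:
  "S \<in> closed_subspaces \<Longrightarrow> csubspace S"
  "S \<in> closed_subspaces \<Longrightarrow> closed S"
  by (simp_all add: closed_subspaces_def)

lemma L_Sup_subset_iff:
  assumes "T \<in> closed_subspaces"
  shows "L_Sup F \<subseteq> T \<longleftrightarrow> (\<forall>A\<in>F. A \<subseteq> T)"
  using assms unfolding L_Sup_def by blast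

lemma proj_unique:
  assumes S: "csubspace S"
    and p: "p \<in> S" "\<forall>s\<in>S. cinner s (\<psi> - p) = 0"
    and q: "q \<in> S" "\<forall>s\<in>S. cinner s (\<psi> - q) = 0"
  shows "p = q"
proof -
  have "p - q \<in> S"
    using csubspace_diff[OF S p(1) q(1)] .
  then have "cinner (p - q) ((\<psi> - q) - (\<psi> - p)) = 0"
    using p(2) q(2) by (simp add: cinner_diff_right)
  then show ?thesis
    by (simp add: cinner_self_eq_zero)
qed

lemma proj_eqI:
  assumes "csubspace S" "p \<in> S" "\<forall>s\<in>S. cinner s (\<psi> - p) = 0"
  shows "proj S \<psi> = p"
  unfolding proj_def by (rule the_equality) (use assms proj_unique in blast)+

lemma proj_of_mem: "csubspace S \<Longrightarrow> \<psi> \<in> S \<Longrightarrow> proj S \<psi> = \<psi>"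
  by (rule proj_eqI) auto

text \<open>A nearest point is an orthogonal projection: otherwise moving from \<open>p\<close> by
\<open>t s\<close> with \<open>t = \<langle>s, \<psi> - p\<rangle> / \<parallel>s\<parallel>\<^sup>2\<close> would decrease the squared distance by
\<open>|\<langle>s, \<psi> - p\<rangle>|\<^sup>2 / \<parallel>s\<parallel>\<^sup>2\<close>.\<close>

lemma nearest_point_orthogonal:
  assumes S: "csubspace S" and p: "p \<in> S"
    and nearest: "\<forall>s\<in>S. (norm (\<psi> - p))\<^sup>2 \<le> (norm (\<psi> - s))\<^sup>2"
    and s: "s \<in> S"
  shows "cinner s (\<psi> - p) = 0"
proof (cases "s = 0")
  case True
  then show ?thesis by simp
next
  case False
  define r where "r = \<psi> - p"
  define c where "c = cinner s r"
  define N where "N = (norm s)\<^sup>2"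
  define t where "t = c / complex_of_real N"
  have N: "N > 0"
    using False by (simp add: N_def)
  have "p + t *\<^sub>C s \<in> S"
    using S p s by (simp add: csubspace_add csubspace_scaleC)
  then have le: "(norm r)\<^sup>2 \<le> (norm (r - t *\<^sub>C s))\<^sup>2"
    using nearest unfolding r_def by (metis diff_diff_eq)
  have "(norm (r - t *\<^sub>C s))\<^sup>2 = (norm r)\<^sup>2 + (cmod t)\<^sup>2 * N - 2 * Re (t * cinner r s)"
    by (simp add: power2_norm_diff power2_norm_scaleC cinner_scaleC_right N_def)
  also have "cinner r s = cnj c"
    unfolding c_def by (rule cinner_commute)
  also have "(cmod t)\<^sup>2 * N = (cmod c)\<^sup>2 / N"
    using N by (simp add: t_def norm_divide power_divide power2_eq_square)
  also have "Re (t * cnj c) = (cmod c)\<^sup>2 / N"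
  proof -
    have "t * cnj c = (c * cnj c) / complex_of_real N"
      by (simp add: t_def)
    also have "c * cnj c = complex_of_real ((cmod c)\<^sup>2)"
      by (metis complex_norm_square)
    finally show ?thesis
      by (simp add: Re_divide_of_real)
  qed
  finally have "(cmod c)\<^sup>2 / N \<le> 0"
    using le by simp
  then have "(cmod c)\<^sup>2 \<le> 0"
    by (simp add: pos_divide_le_eq[OF N])
  then show ?thesis
    by (simp add: c_def r_def)
qed

text \<open>Approximate minimisers of the distance to \<open>\<psi>\<close> are close to each other: the
midpoint of \<open>x\<close> and \<open>y\<close> lies in \<open>S\<close>, so the parallelogram law for \<open>\<psi> - x\<close> and
\<open>\<psi> - y\<close> bounds \<open>\<parallel>x - y\<parallel>\<^sup>2\<close> by twice the two excesses over \<open>D\<close>.\<close>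

lemma approx_minimisers_close:
  assumes S: "csubspace S" and "x \<in> S" "y \<in> S"
    and lower: "\<forall>s\<in>S. D \<le> (norm (\<psi> - s))\<^sup>2"
    and x: "(norm (\<psi> - x))\<^sup>2 \<le> D + \<epsilon>" and y: "(norm (\<psi> - y))\<^sup>2 \<le> D + \<delta>"
  shows "(norm (x - y))\<^sup>2 \<le> 2 * \<epsilon> + 2 * \<delta>"
proof -
  define z where "z = scaleR (1/2) (x + y)"
  have "z \<in> S"
    unfolding z_def using assms by (simp add: csubspace_add csubspace_scaleR)
  have "(\<psi> - x) + (\<psi> - y) = scaleR 2 (\<psi> - z)"
    by (simp add: z_def algebra_simps scaleR_2)
  then have sum: "(norm ((\<psi> - x) + (\<psi> - y)))\<^sup>2 = 4 * (norm (\<psi> - z))\<^sup>2"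
    by (simp add: power2_eq_square)
  have "(norm (x - y))\<^sup>2 = (norm ((\<psi> - x) - (\<psi> - y)))\<^sup>2"
    by (simp add: norm_minus_commute)
  also have "\<dots> = 2 * (norm (\<psi> - x))\<^sup>2 + 2 * (norm (\<psi> - y))\<^sup>2 - 4 * (norm (\<psi> - z))\<^sup>2"
    using parallelogram_law[of "\<psi> - x" "\<psi> - y"] sum by simp
  also have "\<dots> \<le> 2 * \<epsilon> + 2 * \<delta>"
    using x y lower[rule_format, OF \<open>z \<in> S\<close>] by linarith
  finally show ?thesis .
qed

lemma nearest_point_exists:
  fixes \<psi> :: "'a::chilbert"
  assumes S: "csubspace S" "closed S"
  shows "\<exists>p\<in>S. \<forall>s\<in>S. (norm (\<psi> - p))\<^sup>2 \<le> (norm (\<psi> - s))\<^sup>2"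
proof -
  define D where "D = (INF s\<in>S. (norm (\<psi> - s))\<^sup>2)"
  have bdd: "bdd_below ((\<lambda>s. (norm (\<psi> - s))\<^sup>2) ` S)"
    by (rule bdd_belowI[of _ 0]) auto
  have lower: "\<forall>s\<in>S. D \<le> (norm (\<psi> - s))\<^sup>2"
    unfolding D_def using bdd by (auto intro: cINF_lower)
  have "\<exists>s\<in>S. (norm (\<psi> - s))\<^sup>2 < D + inverse (real (Suc n))" for n
    using cInf_lessD[of "(\<lambda>s. (norm (\<psi> - s))\<^sup>2) ` S" "D + inverse (real (Suc n))"]
      csubspace_0[OF S(1)] by (auto simp: D_def)
  then obtain x where x: "\<And>n. x n \<in> S"
      "\<And>n. (norm (\<psi> - x n))\<^sup>2 < D + inverse (real (Suc n))"
    by metis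
  have "Cauchy x"
  proof (rule CauchyI)
    fix e :: real
    assume "0 < e"
    obtain M where M: "inverse (real (Suc M)) < e\<^sup>2 / 4"
      using reals_Archimedean[of "e\<^sup>2 / 4"] \<open>0 < e\<close> by auto
    have "norm (x m - x n) < e" if "M \<le> m" "M \<le> n" for m n
    proof -
      have "inverse (real (Suc m)) \<le> inverse (real (Suc M))"
        "inverse (real (Suc n)) \<le> inverse (real (Suc M))"
        using that by (simp_all add: le_imp_inverse_le)
      then have "(norm (x m - x n))\<^sup>2 < e\<^sup>2"
        using approx_minimisers_close[OF S(1) x(1) x(1) lower
            less_imp_le[OF x(2)] less_imp_le[OF x(2)], of m n] M
        by linarith
      then show ?thesis
        using \<open>0 < e\<close> by (simp add: power_less_imp_less_base)
    qed
    then show "\<exists>M. \<forall>m\<ge>M. \<forall>n\<ge>M. norm (x m - x n) < e"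
      by blast
  qed
  then obtain p where p: "x \<longlonglongrightarrow> p"
    using Cauchy_convergent_iff convergent_def by blast
  have "p \<in> S"
    using closed_sequentially[OF S(2) x(1) p] .
  have "(\<lambda>n. (norm (\<psi> - x n))\<^sup>2) \<longlonglongrightarrow> (norm (\<psi> - p))\<^sup>2"
    by (intro tendsto_intros p)
  moreover have "(\<lambda>n. D + inverse (real (Suc n))) \<longlonglongrightarrow> D + 0"
    by (intro tendsto_intros LIMSEQ_inverse_real_of_nat)
  ultimately have "(norm (\<psi> - p))\<^sup>2 \<le> D + 0"
    by (rule LIMSEQ_le) (use x(2) less_imp_le in blast)
  then show ?thesis
    using \<open>p \<in> S\<close> lower by (metis add_0_right order_trans)
qed

lemma proj_in_orthogonal:
  fixes \<psi> :: "'a::chilbert"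
  assumes "S \<in> closed_subspaces"
  shows "proj S \<psi> \<in> S" "\<forall>s\<in>S. cinner s (\<psi> - proj S \<psi>) = 0"
proof -
  note S = closed_subspacesD[OF assms]
  obtain p where p: "p \<in> S" "\<forall>s\<in>S. (norm (\<psi> - p))\<^sup>2 \<le> (norm (\<psi> - s))\<^sup>2"
    using nearest_point_exists[OF S] by blast
  have orth: "\<forall>s\<in>S. cinner s (\<psi> - p) = 0"
    using nearest_point_orthogonal[OF S(1) p] by blast
  show "proj S \<psi> \<in> S" "\<forall>s\<in>S. cinner s (\<psi> - proj S \<psi>) = 0"
    using proj_eqI[OF S(1) p(1) orth] p(1) orth by simp_all
qed

lemma norm_proj_eq_iff_mem:
  fixes \<psi> :: "'a::chilbert"
  assumes S: "S \<in> closed_subspaces"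
  shows "norm (proj S \<psi>) = norm \<psi> \<longleftrightarrow> \<psi> \<in> S"
proof
  define p where "p = proj S \<psi>"
  assume "norm (proj S \<psi>) = norm \<psi>"
  moreover have "(norm \<psi>)\<^sup>2 = (norm p)\<^sup>2 + (norm (\<psi> - p))\<^sup>2"
    using power2_norm_add[of p "\<psi> - p"] proj_in_orthogonal[OF S, of \<psi>] by (simp add: p_def)
  ultimately have "\<psi> = p"
    by (simp add: p_def)
  then show "\<psi> \<in> S"
    by (metis proj_in_orthogonal(1)[OF S] p_def)
qed (simp add: proj_of_mem closed_subspacesD[OF S])

lemma mem_ray_self: "\<psi> \<in> ray \<psi>"
  unfolding ray_def by (metis (mono_tags) mem_Collect_eq scaleC_one)

lemma ray_subset_iff: "csubspace T \<Longrightarrow> ray \<psi> \<subseteq> T \<longleftrightarrow> \<psi> \<in> T"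
  using mem_ray_self[of \<psi>] by (auto simp: ray_def csubspace_scaleC)

lemma ebar_eq_1_iff_subset:
  fixes r :: "'a::chilbert set"
  assumes r: "r \<in> rays" and S: "S \<in> closed_subspaces"
  shows "ebar r S = 1 \<longleftrightarrow> r \<subseteq> S"
proof -
  define \<psi> where "\<psi> = (SOME \<psi>. \<psi> \<noteq> 0 \<and> ray \<psi> = r)"
  have "\<psi> \<noteq> 0 \<and> ray \<psi> = r"
    unfolding \<psi>_def by (rule someI_ex) (use r in \<open>auto simp: rays_def\<close>)
  then have "\<psi> \<noteq> 0" "ray \<psi> = r" by auto
  have "ebar r S = (norm (proj S \<psi>))\<^sup>2 / (norm \<psi>)\<^sup>2"
    unfolding ebar_def \<psi>_def[symmetric] by simp
  also have "\<dots> = 1 \<longleftrightarrow> norm (proj S \<psi>) = norm \<psi>"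
    using \<open>\<psi> \<noteq> 0\<close> by (auto simp: power2_eq_iff_nonneg)
  also have "\<dots> \<longleftrightarrow> r \<subseteq> S"
    using norm_proj_eq_iff_mem[OF S] ray_subset_iff[OF closed_subspacesD(1)[OF S]]
    by (simp add: \<open>ray \<psi> = r\<close>[symmetric])
  finally show ?thesis .
qed

lemma chu_morphism_ray_subset_iff:
  fixes f_low :: "'a::chilbert set \<Rightarrow> 'b::chilbert set"
  assumes f: "chu_morphism rays closed_subspaces ebar rays closed_subspaces ebar f_low f_up"
    and r: "r \<in> rays" and T: "T \<in> closed_subspaces"
  shows "f_low r \<subseteq> T \<longleftrightarrow> r \<subseteq> f_up T"
proof -
  have "f_low r \<in> rays" "f_up T \<in> closed_subspaces"
    and eval: "ebar r (f_up T) = ebar (f_low r) T"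
    using f r T unfolding chu_morphism_def by auto
  have "f_low r \<subseteq> T \<longleftrightarrow> ebar (f_low r) T = 1"
    using ebar_eq_1_iff_subset[OF \<open>f_low r \<in> rays\<close> T] by simp
  also have "\<dots> \<longleftrightarrow> r \<subseteq> f_up T"
    using ebar_eq_1_iff_subset[OF r \<open>f_up T \<in> closed_subspaces\<close>] eval by simp
  finally show ?thesis .
qed

theorem lemma3p8:
  fixes f_low :: "'a::chilbert set \<Rightarrow> 'b::chilbert set"
    and f_up :: "'b set \<Rightarrow> 'a set"
  assumes "chu_morphism (rays :: 'a set set) (closed_subspaces :: 'a set set) ebar
                        (rays :: 'b set set) (closed_subspaces :: 'b set set) ebar f_low f_up"
  shows "\<forall>S \<in> (closed_subspaces :: 'a set set). \<forall>T \<in> (closed_subspaces :: 'b set set).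
           (f_direct f_low S \<subseteq> T \<longleftrightarrow> S \<subseteq> f_up T)"
proof (intro ballI)
  fix S :: "'a set" and T :: "'b set"
  assume T: "T \<in> closed_subspaces"
  have "csubspace (f_up T)"
    using assms T by (auto simp: chu_morphism_def closed_subspaces_def)
  have "f_direct f_low S \<subseteq> T \<longleftrightarrow> (\<forall>\<psi>\<in>S. \<psi> \<noteq> 0 \<longrightarrow> f_low (ray \<psi>) \<subseteq> T)"
    unfolding f_direct_def L_Sup_subset_iff[OF T] by blast
  also have "\<dots> \<longleftrightarrow> (\<forall>\<psi>\<in>S. \<psi> \<noteq> 0 \<longrightarrow> ray \<psi> \<subseteq> f_up T)"
    using chu_morphism_ray_subset_iff[OF assms _ T] by (auto simp: rays_def)
  also have "\<dots> \<longleftrightarrow> S \<subseteq> f_up T"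
    using ray_subset_iff[OF \<open>csubspace (f_up T)\<close>] csubspace_0[OF \<open>csubspace (f_up T)\<close>] by auto
  finally show "f_direct f_low S \<subseteq> T \<longleftrightarrow> S \<subseteq> f_up T" .
qed

end
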